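(* The Julia set $J(\mathcal{G})$ of the word semigroup $\mathcal{G}$ contains a neighbourhood of $0$.
   Context: For $x,y\in PSL(2,\mathbb{C})$, $\gamma(x,y)=\operatorname{tr}[x,y]-2$. A good word is a reduced word $w=a^{m_1}ba^{m_2}b\cdots ba^{m_n}$ in $\langle a,b\mid b^2=1\rangle$ with $n\ge3$ and $m_i\ne0$ for $2\le i\le n-1$; its word polynomial $p_w\in\mathbb{Z}[z]$ is the unique polynomial such that for every parabolic $f$ and every order-two elliptic $\phi$ in $PSL(2,\mathbb{C})$, $\gamma(f,w(f,\phi))=p_w(\gamma(f,\phi))$, where $w(f,\phi)$ substitutes $a=f$, $b=\phi$. The word semigroup is $\mathcal{G}=\{p_w: w \text{ a good word}\}$ (a semigroup under composition). Its Fatou set $F(\mathcal{G})$ is the set of $z\in\mathbb{C}$ having a neighbourhood $U$ on which the family $\{p|_U:p\in\mathcal{G}\}$ is normal, and $J(\mathcal{G})=\mathbb{C}\setminus F(\mathcal{G})$. *)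

theory Defs
  imports "HOL-Analysis.Analysis" "HOL-Computational_Algebra.Polynomial"
begin

type_synonym cmat = "complex^2^2"

text \<open>Elements of PSL(2,C) are represented by their lifts to SL(2,C);
  all quantities below are independent of the choice of lift.\<close>

definition SL2 :: "cmat \<Rightarrow> bool" where
  "SL2 A \<longleftrightarrow> det A = 1"

definition mpow :: "cmat \<Rightarrow> nat \<Rightarrow> cmat" where
  "mpow A n = ((\<lambda>B. A ** B) ^^ n) (mat 1)"

definition zpow :: "cmat \<Rightarrow> int \<Rightarrow> cmat" where
  "zpow A m = (if 0 \<le> m then mpow A (nat m) else mpow (matrix_inv A) (nat (- m)))"

definition gamma :: "cmat \<Rightarrow> cmat \<Rightarrow> complex" where
  "gamma x y = trace (x ** y ** matrix_inv x ** matrix_inv y) - 2"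

definition parabolic :: "cmat \<Rightarrow> bool" where
  "parabolic A \<longleftrightarrow> SL2 A \<and> (trace A)\<^sup>2 = 4 \<and> A \<noteq> mat 1 \<and> A \<noteq> - mat 1"

definition elliptic2 :: "cmat \<Rightarrow> bool" where
  "elliptic2 A \<longleftrightarrow> SL2 A \<and> trace A = 0"

text \<open>The word a^(m1) b a^(m2) b ... b a^(mn) is encoded by the list [m1,...,mn].\<close>
fun word_eval :: "cmat \<Rightarrow> cmat \<Rightarrow> int list \<Rightarrow> cmat" where
  "word_eval f phi [] = mat 1"
| "word_eval f phi [m] = zpow f m"
| "word_eval f phi (m # m' # ms) = zpow f m ** phi ** word_eval f phi (m' # ms)"

definition good_word :: "int list \<Rightarrow> bool" where
  "good_word ms \<longleftrightarrow> 3 \<le> length ms \<and> (\<forall>i. 1 \<le> i \<and> i < length ms - 1 \<longrightarrow> ms ! i \<noteq> 0)"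

definition word_poly :: "int list \<Rightarrow> complex poly" where
  "word_poly ms = (THE p. \<forall>f phi. parabolic f \<and> elliptic2 phi \<longrightarrow>
      gamma f (word_eval f phi ms) = poly p (gamma f phi))"

definition word_semigroup :: "(complex \<Rightarrow> complex) set" where
  "word_semigroup = {poly (word_poly ms) | ms. good_word ms}"

text \<open>Normality on U (with respect to the spherical metric): every sequence has a
  subsequence converging locally uniformly on U either to a function or to \<infinity>.\<close>
definition normal_family :: "(complex \<Rightarrow> complex) set \<Rightarrow> complex set \<Rightarrow> bool" where
  "normal_family F U \<longleftrightarrow>
    (\<forall>g :: nat \<Rightarrow> complex \<Rightarrow> complex. (\<forall>n. g n \<in> F) \<longrightarrow>
      (\<exists>r. strict_mono r \<and>
        ((\<exists>h. \<forall>K. compact K \<and> K \<subseteq> U \<longrightarrow> uniform_limit K (\<lambda>n. g (r n)) h sequentially) \<or>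
         (\<forall>K. compact K \<and> K \<subseteq> U \<longrightarrow>
            (\<forall>M::real. eventually (\<lambda>n. \<forall>z\<in>K. M \<le> norm (g (r n) z)) sequentially)))))"

definition fatou_set :: "(complex \<Rightarrow> complex) set \<Rightarrow> complex set" where
  "fatou_set F = {z. \<exists>U. open U \<and> z \<in> U \<and> normal_family F U}"

definition julia_set :: "(complex \<Rightarrow> complex) set \<Rightarrow> complex set" where
  "julia_set F = UNIV - fatou_set F"

end

theory Submission
  imports Defs
begin

(* Write a parabolic f as +-(I + N) with N nilpotent.  For U in SL(2,C) the conjugate U f^x U^-1
   is +-(I + x M) with M = U N U^-1 nilpotent, and a direct computation gives
   gamma(f, +-(I + x M)) = x^2 tr(N M)^2 and gamma(f, U) = -tr(N M); hence
   gamma(f, U f^x U^-1) = x^2 gamma(f, U)^2.  As phi^2 = -I, a word followed by its reversal with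
   negated exponents evaluates to +-I, so the good words W(x # xs) = W(xs) a^x W(xs)^-1, W([]) = b,
   have word polynomials P(x # xs) = x^2 P(xs)^2: the semigroup contains every composition of maps
   z |-> x^2 z^2 with x a nonzero integer.  These compositions are homogeneous of degree 2^k.  For
   0 < |w| <= 1/4, choosing each x greedily keeps the orbit of w in the annulus 1/16 <= |z| <= 1/4,
   while at t w, t > 1, the values are t^(2^k) times larger and tend to infinity.  No subsequence
   can converge locally uniformly, to a function or to infinity, on an open set containing w and t w,
   and every open set meeting the disc |z| < 1/4 contains such a pair. *)

section \<open>Two-by-two matrices\<close>

definition mat2 :: "complex \<Rightarrow> complex \<Rightarrow> complex \<Rightarrow> complex \<Rightarrow> cmat" where
  "mat2 a b c d = vector [vector [a, b], vector [c, d]]"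

lemma mat2_nth [simp]:
  "mat2 a b c d $ 1 $ 1 = a" "mat2 a b c d $ 1 $ 2 = b"
  "mat2 a b c d $ 2 $ 1 = c" "mat2 a b c d $ 2 $ 2 = d"
  by (simp_all add: mat2_def vector_1 vector_2)

lemma cmat_eq_iff:
  "(A::cmat) = B \<longleftrightarrow> A$1$1 = B$1$1 \<and> A$1$2 = B$1$2 \<and> A$2$1 = B$2$1 \<and> A$2$2 = B$2$2"
  by (auto simp: vec_eq_iff forall_2)

lemma mat2_cases:
  obtains a b c d where "(A::cmat) = mat2 a b c d"
  by (metis cmat_eq_iff mat2_nth)

lemma mat2_mult_mat2:
  "mat2 a b c d ** mat2 a' b' c' d' = mat2 (a*a' + b*c') (a*b' + b*d') (c*a' + d*c') (c*b' + d*d')"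
  by (simp add: cmat_eq_iff matrix_matrix_mult_def sum_2)

lemma mat_eq_mat2: "(mat k :: cmat) = mat2 k 0 0 k"
  by (simp add: cmat_eq_iff mat_def)

lemma det_mat2: "det (mat2 a b c d) = a*d - b*c"
  by (simp add: det_2)

lemma trace_mat2: "trace (mat2 a b c d) = a + d"
  by (simp add: trace_def sum_2)

lemma matrix_inv_unique:
  fixes A B :: "'a::semiring_1^'n^'n"
  assumes "A ** B = mat 1" "B ** A = mat 1"
  shows "matrix_inv A = B"
proof -
  have "A ** matrix_inv A = mat 1 \<and> matrix_inv A ** A = mat 1"
    unfolding matrix_inv_def by (rule someI_ex) (use assms in blast)
  then have left_inverse: "matrix_inv A ** A = mat 1"
    by blast
  have "matrix_inv A = matrix_inv A ** (A ** B)"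
    by (simp add: assms(1))
  also have "\<dots> = B"
    by (simp add: matrix_mul_assoc left_inverse)
  finally show ?thesis .
qed

lemma matrix_inv_mat2: "a*d - b*c = 1 \<Longrightarrow> matrix_inv (mat2 a b c d) = mat2 d (-b) (-c) a"
  by (rule matrix_inv_unique) (simp_all add: mat2_mult_mat2 mat_eq_mat2 algebra_simps)

lemma mat_mult_commute: "(A::cmat) ** mat k = mat k ** A"
  by (simp add: cmat_eq_iff matrix_matrix_mult_def sum_2 mat_def mult.commute)

lemma mat_mult_mat: "(mat k :: cmat) ** mat l = mat (k * l)"
  by (simp add: mat_eq_mat2 mat2_mult_mat2)

lemma power2_power_eq_one: "(e::'a::comm_monoid_mult)\<^sup>2 = 1 \<Longrightarrow> (e ^ k)\<^sup>2 = 1"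
  by (metis power_mult mult.commute power_one)

section \<open>Parabolic elements\<close>

text \<open>\<open>unipotent e n q r x\<close> is \<open>e (I + x N)\<close> with \<open>N = [[n, q], [r, -n]]\<close>; when
  \<open>n\<^sup>2 + q r = 0\<close> the matrix \<open>N\<close> is nilpotent and these matrices are, up to the sign \<open>e\<close>,
  the one-parameter group through a parabolic element.\<close>
definition unipotent :: "complex \<Rightarrow> complex \<Rightarrow> complex \<Rightarrow> complex \<Rightarrow> complex \<Rightarrow> cmat" where
  "unipotent e n q r x = mat2 (e * (1 + x*n)) (e * (x*q)) (e * (x*r)) (e * (1 - x*n))"

lemma unipotent_mult:
  assumes "n\<^sup>2 + q*r = 0"
  shows "unipotent e n q r x ** unipotent e' n q r y = unipotent (e * e') n q r (x + y)"
  using assms unfolding unipotent_def mat2_mult_mat2 cmat_eq_iff mat2_nth by algebra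

lemma unipotent_zero: "unipotent e n q r 0 = mat e"
  by (simp add: unipotent_def mat_eq_mat2)

lemma matrix_inv_unipotent:
  assumes "n\<^sup>2 + q*r = 0" "e\<^sup>2 = 1"
  shows "matrix_inv (unipotent e n q r x) = unipotent e n q r (- x)"
  using assms by (intro matrix_inv_unique) (simp_all add: unipotent_mult unipotent_zero power2_eq_square)

lemma det_unipotent: "n\<^sup>2 + q*r = 0 \<Longrightarrow> det (unipotent e n q r x) = e\<^sup>2"
  unfolding unipotent_def det_mat2 by algebra

lemma mpow_unipotent:
  assumes "n\<^sup>2 + q*r = 0"
  shows "mpow (unipotent e n q r 1) k = unipotent (e ^ k) n q r (of_nat k)"
proof (induction k)
  case 0
  show ?case by (simp add: mpow_def unipotent_zero)
next
  case (Suc k)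
  have "mpow (unipotent e n q r 1) (Suc k) = unipotent e n q r 1 ** mpow (unipotent e n q r 1) k"
    by (simp add: mpow_def)
  then show ?case by (simp add: Suc unipotent_mult[OF assms] add.commute)
qed

lemma zpow_unipotent:
  assumes "n\<^sup>2 + q*r = 0" "e\<^sup>2 = 1"
  shows "zpow (unipotent e n q r 1) m = unipotent (e ^ nat \<bar>m\<bar>) n q r (of_int m)"
proof (cases "0 \<le> m")
  case True
  then show ?thesis by (simp add: zpow_def mpow_unipotent[OF assms(1)])
next
  case False
  have "matrix_inv (unipotent e n q r 1) = unipotent e (-n) (-q) (-r) 1"
    using assms by (simp add: matrix_inv_unipotent) (simp add: unipotent_def)
  moreover have "(-n)\<^sup>2 + (-q)*(-r) = 0"
    using assms(1) by simp
  ultimately show ?thesis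
    using False by (simp add: zpow_def mpow_unipotent) (simp add: unipotent_def)
qed

lemma parabolic_unipotent:
  assumes "parabolic f"
  obtains e n q r where "e\<^sup>2 = 1" "n\<^sup>2 + q*r = 0" "f = unipotent e n q r 1"
proof -
  obtain a b c d where f: "f = mat2 a b c d"
    by (rule mat2_cases)
  define e where "e = (a + d) / 2"
  have det: "a*d - b*c = 1" and e2: "e\<^sup>2 = 1"
    using assms unfolding parabolic_def SL2_def f e_def det_mat2 trace_mat2
    by (simp_all add: power_divide)
  have tr: "a + d = 2 * e"
    unfolding e_def by simp
  show ?thesis
  proof
    show "f = unipotent e (e*a - 1) (e*b) (e*c) 1"
      unfolding f unipotent_def cmat_eq_iff mat2_nth
      using e2 tr by algebra
    show "(e*a - 1)\<^sup>2 + (e*b)*(e*c) = 0"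
      using e2 tr det by algebra
  qed (rule e2)
qed

lemma det_zpow_parabolic: "parabolic f \<Longrightarrow> det (zpow f m) = 1"
  by (erule parabolic_unipotent) (simp add: zpow_unipotent det_unipotent power2_power_eq_one)

lemma zpow_mult_zpow_uminus: "parabolic f \<Longrightarrow> zpow f m ** zpow f (- m) = mat 1"
  by (erule parabolic_unipotent)
    (simp add: zpow_unipotent unipotent_mult unipotent_zero power2_power_eq_one flip: power2_eq_square)

lemma elliptic2_square: "elliptic2 phi \<Longrightarrow> phi ** phi = mat (- 1)"
proof -
  assume "elliptic2 phi"
  moreover obtain a b c d where phi: "phi = mat2 a b c d"
    by (rule mat2_cases)
  ultimately have "a + d = 0" "a*d - b*c = 1"
    by (auto simp: elliptic2_def SL2_def det_mat2 trace_mat2)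
  then show ?thesis
    unfolding phi mat2_mult_mat2 mat_eq_mat2 cmat_eq_iff mat2_nth by algebra
qed

lemma trace_unipotent_mult:
  "trace (unipotent e n q r x ** unipotent e' n' q' r' y)
     = e * e' * (2 + x * y * (2*n*n' + q*r' + r*q'))"
  unfolding unipotent_def mat2_mult_mat2 trace_mat2 by algebra

lemma gamma_unipotent:
  assumes "n\<^sup>2 + q*r = 0" "n'\<^sup>2 + q'*r' = 0" "e\<^sup>2 = 1" "s\<^sup>2 = 1"
  shows "gamma (unipotent e n q r 1) (unipotent s n' q' r' x) = x\<^sup>2 * (2*n*n' + q*r' + r*q')\<^sup>2"
  using assms unfolding gamma_def matrix_inv_unipotent[OF assms(1,3)] matrix_inv_unipotent[OF assms(2,4)]
  unfolding unipotent_def mat2_mult_mat2 trace_mat2 by algebra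

lemma conj_unipotent:
  assumes "det U = 1" "n\<^sup>2 + q*r = 0"
  obtains n' q' r' where "n'\<^sup>2 + q'*r' = 0"
    "\<And>\<sigma> V s x. U ** V = mat \<sigma> \<Longrightarrow> U ** unipotent s n q r x ** V = unipotent (\<sigma> * s) n' q' r' x"
proof -
  obtain a b c d where U: "U = mat2 a b c d"
    by (rule mat2_cases)
  have det: "a*d - b*c = 1"
    using assms(1) by (simp add: U det_mat2)
  \<comment> \<open>\<open>[[n', q'], [r', -n']] = U N U\<^sup>-\<^sup>1\<close>\<close>
  define n' where "n' = a*d*n + b*c*n + b*d*r - a*c*q"
  define q' where "q' = a\<^sup>2*q - b\<^sup>2*r - 2*a*b*n"
  define r' where "r' = d\<^sup>2*r - c\<^sup>2*q + 2*c*d*n"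
  have "n'\<^sup>2 + q'*r' = 0"
    unfolding n'_def q'_def r'_def using assms(2) det by algebra
  moreover have "U ** unipotent s n q r x ** V = unipotent (\<sigma> * s) n' q' r' x"
    if UV: "U ** V = mat \<sigma>" for \<sigma> V s x
  proof -
    have "mat2 d (-b) (-c) a ** U = mat 1"
      using det by (simp add: U mat2_mult_mat2 mat_eq_mat2 algebra_simps)
    then have "V = mat2 d (-b) (-c) a ** (U ** V)"
      by (simp add: matrix_mul_assoc)
    also have "\<dots> = mat2 (\<sigma>*d) (-(\<sigma>*b)) (-(\<sigma>*c)) (\<sigma>*a)"
      by (simp add: UV mat2_mult_mat2 mat_eq_mat2 mult.commute)
    finally have V: "V = mat2 (\<sigma>*d) (-(\<sigma>*b)) (-(\<sigma>*c)) (\<sigma>*a)" .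
    show ?thesis
      unfolding U V unipotent_def mat2_mult_mat2 cmat_eq_iff mat2_nth n'_def q'_def r'_def
      using det by algebra
  qed
  ultimately show ?thesis
    by (rule that)
qed

lemma matrix_mult_matrix_inv_det1: "det (A::cmat) = 1 \<Longrightarrow> A ** matrix_inv A = mat 1"
  by (cases A rule: mat2_cases)
     (simp add: det_mat2 matrix_inv_mat2 mat2_mult_mat2 mat_eq_mat2 algebra_simps)

lemma gamma_conj_zpow:
  assumes "parabolic f" "det U = 1" "U ** V = mat \<sigma>" "\<sigma>\<^sup>2 = 1"
  shows "gamma f (U ** zpow f x ** V) = of_int x ^ 2 * (gamma f U)\<^sup>2"
proof -
  obtain e n q r where e: "e\<^sup>2 = 1" and N: "n\<^sup>2 + q*r = 0" and f: "f = unipotent e n q r 1"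
    using parabolic_unipotent[OF assms(1)] .
  obtain n' q' r' where N': "n'\<^sup>2 + q'*r' = 0" and conj:
    "\<And>\<sigma> V s x. U ** V = mat \<sigma> \<Longrightarrow> U ** unipotent s n q r x ** V = unipotent (\<sigma> * s) n' q' r' x"
    using conj_unipotent[OF assms(2) N] by blast
  define T where "T = 2*n*n' + q*r' + r*q'"
  have s: "(\<sigma> * e ^ nat \<bar>x\<bar>)\<^sup>2 = 1"
    using assms(4) power2_power_eq_one[OF e] by (simp add: power_mult_distrib)
  have gamma_U: "gamma f U = - T"
  proof -
    have conj_inv: "U ** matrix_inv f ** matrix_inv U = unipotent e n' q' r' (-1)"
      using conj[OF matrix_mult_matrix_inv_det1[OF assms(2)], of e "-1"]
      by (simp add: f matrix_inv_unipotent[OF N e])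
    have "gamma f U = trace (f ** (U ** matrix_inv f ** matrix_inv U)) - 2"
      unfolding gamma_def by (simp only: matrix_mul_assoc)
    also have "\<dots> = trace (f ** unipotent e n' q' r' (-1)) - 2"
      by (simp only: conj_inv)
    also have "\<dots> = - T"
      using e by (simp add: f trace_unipotent_mult T_def power2_eq_square)
    finally show ?thesis .
  qed
  have "gamma f (U ** zpow f x ** V) = gamma f (unipotent (\<sigma> * e ^ nat \<bar>x\<bar>) n' q' r' (of_int x))"
    using conj[OF assms(3)] by (simp add: f zpow_unipotent[OF N e])
  also have "\<dots> = of_int x ^ 2 * T\<^sup>2"
    unfolding f T_def by (rule gamma_unipotent[OF N N' e s])
  also have "\<dots> = of_int x ^ 2 * (gamma f U)\<^sup>2"
    by (simp add: gamma_U)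
  finally show ?thesis .
qed

section \<open>Nested words\<close>

lemma zpow_0 [simp]: "zpow f 0 = mat 1"
  by (simp add: zpow_def mpow_def)

lemma word_eval_Cons: "ys \<noteq> [] \<Longrightarrow> word_eval f phi (m # ys) = zpow f m ** phi ** word_eval f phi ys"
  by (cases ys) auto

lemma word_eval_append:
  "xs \<noteq> [] \<Longrightarrow> ys \<noteq> [] \<Longrightarrow> word_eval f phi (xs @ ys) = word_eval f phi xs ** phi ** word_eval f phi ys"
proof (induction xs)
  case (Cons m xs)
  then show ?case
    by (cases xs) (simp_all add: word_eval_Cons matrix_mul_assoc)
qed simp

lemma mat_mult_middle: "(A::cmat) ** mat k ** B = mat k ** (A ** B)"
  by (metis mat_mult_commute matrix_mul_assoc)

lemma word_eval_mult_reverse: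
  assumes "parabolic f" "elliptic2 phi" "ms \<noteq> []"
  shows "\<exists>\<sigma>. \<sigma>\<^sup>2 = 1 \<and> word_eval f phi ms ** word_eval f phi (map uminus (rev ms)) = mat \<sigma>"
  using assms(3)
proof (induction ms rule: induct_list012)
  case (2 m)
  show ?case
    using zpow_mult_zpow_uminus[OF assms(1)] by (intro exI[of _ 1]) simp
next
  case (3 m m' ms)
  let ?W = "word_eval f phi (m' # ms)" and ?W' = "word_eval f phi (map uminus (rev (m' # ms)))"
  obtain \<sigma> where \<sigma>: "\<sigma>\<^sup>2 = 1" "?W ** ?W' = mat \<sigma>"
    using "3.IH"(2) by blast
  have "word_eval f phi (m # m' # ms) ** word_eval f phi (map uminus (rev (m # m' # ms)))
      = zpow f m ** phi ** (?W ** ?W') ** phi ** zpow f (- m)"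
    using word_eval_append[of "map uminus (rev (m' # ms))" "[- m]" f phi]
    by (simp add: matrix_mul_assoc)
  also have "\<dots> = mat \<sigma> ** (zpow f m ** (phi ** phi) ** zpow f (- m))"
    unfolding \<sigma>(2) by (simp only: mat_mult_middle matrix_mul_assoc)
  also have "\<dots> = mat (- \<sigma>)"
    unfolding elliptic2_square[OF assms(2)] mat_mult_middle zpow_mult_zpow_uminus[OF assms(1)]
    by (simp add: mat_mult_mat)
  finally show ?case
    using \<sigma>(1) by (intro exI[of _ "- \<sigma>"]) simp
qed simp

lemma det_word_eval: "parabolic f \<Longrightarrow> det phi = 1 \<Longrightarrow> det (word_eval f phi ms) = 1"
  by (induction f phi ms rule: word_eval.induct) (auto simp: det_mul det_zpow_parabolic det_I)

text \<open>If \<open>W\<close> is the word of \<open>nested_word xs\<close> and \<open>W'\<close> its reversal with negated exponents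
  (which evaluates to \<open>\<plusminus>W\<^sup>-\<^sup>1\<close>), then \<open>nested_word (x # xs)\<close> is the word \<open>W a\<^sup>x W'\<close>.\<close>
fun nested_exps :: "int list \<Rightarrow> int list" where
  "nested_exps [] = []"
| "nested_exps (x # xs) = nested_exps xs @ [x] @ map uminus (rev (nested_exps xs))"

definition nested_word :: "int list \<Rightarrow> int list" where
  "nested_word xs = 0 # nested_exps xs @ [0]"

lemma word_eval_nested_word_Cons:
  "word_eval f phi (nested_word (x # xs))
     = word_eval f phi (nested_word xs) ** zpow f x ** word_eval f phi (map uminus (rev (nested_word xs)))"
proof -
  let ?w = "nested_exps xs"
  let ?B = "map uminus (rev ?w) @ [0]"
  have split: "nested_word (x # xs) = (0 # ?w) @ (x # ?B)"
    by (simp add: nested_word_def)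
  have W: "word_eval f phi (nested_word xs) = word_eval f phi (0 # ?w) ** phi"
    using word_eval_append[of "0 # ?w" "[0]" f phi] by (simp add: nested_word_def)
  have W': "word_eval f phi (map uminus (rev (nested_word xs))) = phi ** word_eval f phi ?B"
    using word_eval_Cons[of ?B f phi 0] by (simp add: nested_word_def)
  show ?thesis
    unfolding split W W' by (simp add: word_eval_append word_eval_Cons matrix_mul_assoc del: append_Cons)
qed

fun square_comp_poly :: "int list \<Rightarrow> complex poly" where
  "square_comp_poly [] = [:0, 1:]"
| "square_comp_poly (x # xs) = smult (of_int x ^ 2) (square_comp_poly xs ^ 2)"

lemma gamma_nested_word:
  assumes "parabolic f" "elliptic2 phi"
  shows "gamma f (word_eval f phi (nested_word xs)) = poly (square_comp_poly xs) (gamma f phi)"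
proof (induction xs)
  case Nil
  show ?case
    by (simp add: nested_word_def)
next
  case (Cons x xs)
  let ?W = "word_eval f phi (nested_word xs)"
  have "nested_word xs \<noteq> []"
    by (simp add: nested_word_def)
  then obtain \<sigma> where "\<sigma>\<^sup>2 = 1" "?W ** word_eval f phi (map uminus (rev (nested_word xs))) = mat \<sigma>"
    using word_eval_mult_reverse[OF assms] by blast
  moreover have "det ?W = 1"
    using assms by (simp add: det_word_eval elliptic2_def SL2_def)
  ultimately show ?case
    by (simp add: word_eval_nested_word_Cons gamma_conj_zpow[OF assms(1)] Cons)
qed

lemma gamma_surj: "\<exists>f phi. parabolic f \<and> elliptic2 phi \<and> gamma f phi = z"
proof (intro exI conjI)
  define s where "s = csqrt z"
  show "parabolic (mat2 1 1 0 1)"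
    by (simp add: parabolic_def SL2_def det_mat2 trace_mat2 cmat_eq_iff mat_def)
  show "elliptic2 (mat2 \<i> 0 s (- \<i>))"
    by (simp add: elliptic2_def SL2_def det_mat2 trace_mat2)
  have "s\<^sup>2 = z"
    by (simp add: s_def)
  then show "gamma (mat2 1 1 0 1) (mat2 \<i> 0 s (- \<i>)) = z"
    unfolding gamma_def
    by (simp add: matrix_inv_mat2 mat2_mult_mat2 trace_mat2) (simp add: algebra_simps power2_eq_square)
qed

lemma word_poly_nested_word: "word_poly (nested_word xs) = square_comp_poly xs"
  unfolding word_poly_def
proof (rule the_equality)
  show "\<forall>f phi. parabolic f \<and> elliptic2 phi \<longrightarrow>
      gamma f (word_eval f phi (nested_word xs)) = poly (square_comp_poly xs) (gamma f phi)"
    using gamma_nested_word by blast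
next
  fix p
  assume p: "\<forall>f phi. parabolic f \<and> elliptic2 phi \<longrightarrow>
      gamma f (word_eval f phi (nested_word xs)) = poly p (gamma f phi)"
  have "poly p z = poly (square_comp_poly xs) z" for z
    using gamma_surj[of z] p gamma_nested_word by metis
  then show "p = square_comp_poly xs"
    by (simp add: poly_eq_poly_eq_iff[symmetric] fun_eq_iff)
qed

lemma set_nested_exps: "set (nested_exps xs) \<subseteq> set xs \<union> uminus ` set xs"
  by (induction xs) auto

lemma good_word_nested_word:
  assumes "xs \<noteq> []" "0 \<notin> set xs"
  shows "good_word (nested_word xs)"
proof -
  let ?w = "nested_exps xs"
  have nz: "0 \<notin> set ?w"
    using set_nested_exps[of xs] assms(2) by force
  have "?w \<noteq> []"
    using assms(1) by (cases xs) auto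
  then have "3 \<le> length (nested_word xs)"
    by (cases ?w) (auto simp: nested_word_def)
  moreover have "nested_word xs ! i \<noteq> 0" if "1 \<le> i" "i < length (nested_word xs) - 1" for i
  proof -
    have "nested_word xs ! i = ?w ! (i - 1)" "i - 1 < length ?w"
      using that by (auto simp: nested_word_def nth_Cons' nth_append)
    then show ?thesis
      using nz nth_mem by metis
  qed
  ultimately show ?thesis
    unfolding good_word_def by blast
qed

lemma square_comp_poly_in_word_semigroup:
  "xs \<noteq> [] \<Longrightarrow> 0 \<notin> set xs \<Longrightarrow> poly (square_comp_poly xs) \<in> word_semigroup"
  unfolding word_semigroup_def by (metis (mono_tags, lifting) good_word_nested_word word_poly_nested_word mem_Collect_eq)

lemma poly_square_comp_poly_scale:
  "poly (square_comp_poly xs) (t * z) = t ^ (2 ^ length xs) * poly (square_comp_poly xs) z"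
  by (induction xs) (simp_all add: power_mult_distrib power_mult[symmetric] mult_ac)

section \<open>Escaping orbits\<close>

lemma not_normal_family_if_bounded_and_escaping:
  assumes "\<And>n. g n \<in> F" "a \<in> V" "b \<in> V" "\<And>n. cmod (g n a) \<le> B"
    and "filterlim (\<lambda>n. cmod (g n b)) at_top sequentially"
  shows "\<not> normal_family F V"
proof
  assume "normal_family F V"
  then obtain r where r: "strict_mono r" and
    "(\<exists>h. \<forall>K. compact K \<and> K \<subseteq> V \<longrightarrow> uniform_limit K (\<lambda>n. g (r n)) h sequentially) \<or>
     (\<forall>K. compact K \<and> K \<subseteq> V \<longrightarrow>
        (\<forall>M::real. eventually (\<lambda>n. \<forall>z\<in>K. M \<le> cmod (g (r n) z)) sequentially))"
    using assms(1) unfolding normal_family_def by blast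
  then show False
  proof (elim disjE exE)
    fix h
    assume "\<forall>K. compact K \<and> K \<subseteq> V \<longrightarrow> uniform_limit K (\<lambda>n. g (r n)) h sequentially"
    then have "(\<lambda>n. g (r n) b) \<longlonglongrightarrow> h b"
      using assms(3) by (auto dest: spec[of _ "{b}"])
    moreover have "filterlim (\<lambda>n. cmod (g (r n) b)) at_top sequentially"
      using filterlim_compose[OF assms(5) filterlim_subseq[OF r]] by (simp add: o_def)
    then have "filterlim (\<lambda>n. g (r n) b) at_infinity sequentially"
      by (rule filterlim_norm_at_top_imp_at_infinity)
    ultimately show False
      by (rule not_tendsto_and_filterlim_at_infinity[OF trivial_limit_sequentially])
  next
    assume "\<forall>K. compact K \<and> K \<subseteq> V \<longrightarrow>
        (\<forall>M::real. eventually (\<lambda>n. \<forall>z\<in>K. M \<le> cmod (g (r n) z)) sequentially)"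
    then have "eventually (\<lambda>n. B + 1 \<le> cmod (g (r n) a)) sequentially"
      using assms(2) by (auto dest: spec[of _ "{a}"])
    then obtain n where "B + 1 \<le> cmod (g (r n) a)"
      using eventually_sequentially by auto
    then show False
      using assms(4)[of "r n"] by simp
  qed
qed

definition square_exponent :: "complex \<Rightarrow> int" where
  "square_exponent z = \<lceil>1 / (4 * cmod z)\<rceil>"

lemma square_exponent_bounds:
  assumes "0 < cmod z" "cmod z \<le> 1/4"
  shows "square_exponent z \<noteq> 0"
    and "1/16 \<le> cmod (of_int (square_exponent z) ^ 2 * z\<^sup>2)"
    and "cmod (of_int (square_exponent z) ^ 2 * z\<^sup>2) \<le> 1/4"
proof -
  let ?k = "real_of_int (square_exponent z)"
  have "1 / (4 * cmod z) \<le> ?k" "?k < 1 / (4 * cmod z) + 1"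
    unfolding square_exponent_def by linarith+
  then have lo: "1/4 \<le> ?k * cmod z" and hi: "?k * cmod z \<le> 1/2"
    using assms by (simp_all add: field_simps)
  have norm_eq: "cmod (of_int (square_exponent z) ^ 2 * z\<^sup>2) = (?k * cmod z)\<^sup>2"
    by (simp add: norm_mult norm_power power_mult_distrib)
  show "square_exponent z \<noteq> 0"
    using lo by auto
  show "1/16 \<le> cmod (of_int (square_exponent z) ^ 2 * z\<^sup>2)"
    unfolding norm_eq using power_mono[OF lo, of 2] by (simp add: power2_eq_square)
  show "cmod (of_int (square_exponent z) ^ 2 * z\<^sup>2) \<le> 1/4"
    unfolding norm_eq using power_mono[OF hi, of 2] lo by (simp add: power2_eq_square)
qed

fun greedy_exps :: "complex \<Rightarrow> nat \<Rightarrow> int list" where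
  "greedy_exps w 0 = []"
| "greedy_exps w (Suc k) = square_exponent (poly (square_comp_poly (greedy_exps w k)) w) # greedy_exps w k"

lemma length_greedy_exps [simp]: "length (greedy_exps w k) = k"
  by (induction k) auto

lemma greedy_exps_bounds:
  assumes "0 < cmod w" "cmod w \<le> 1/4"
  shows "0 \<notin> set (greedy_exps w k) \<and> 0 < cmod (poly (square_comp_poly (greedy_exps w k)) w)
    \<and> cmod (poly (square_comp_poly (greedy_exps w k)) w) \<le> 1/4"
proof (induction k)
  case (Suc k)
  let ?z = "poly (square_comp_poly (greedy_exps w k)) w"
  have "0 < cmod ?z" "cmod ?z \<le> 1/4"
    using Suc by auto
  from square_exponent_bounds[OF this] show ?case
    using Suc by auto
qed (use assms in simp)

lemma greedy_exps_lower_bound: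
  assumes "0 < cmod w" "cmod w \<le> 1/4"
  shows "1/16 \<le> cmod (poly (square_comp_poly (greedy_exps w (Suc k))) w)"
  using greedy_exps_bounds[OF assms, of k] square_exponent_bounds(2) by simp

lemma word_semigroup_escaping_sequence:
  assumes "0 < cmod w" "cmod w \<le> 1/4" "1 < t"
  obtains g where "\<And>n. g n \<in> word_semigroup" "\<And>n. cmod (g n w) \<le> 1/4"
    "filterlim (\<lambda>n. cmod (g n (of_real t * w))) at_top sequentially"
proof
  define g where "g n = poly (square_comp_poly (greedy_exps w (Suc n)))" for n
  note bounds = greedy_exps_bounds[OF assms(1,2)]
  show "g n \<in> word_semigroup" for n
    unfolding g_def using bounds[of "Suc n"]
    by (intro square_comp_poly_in_word_semigroup) (auto simp flip: length_0_conv)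
  show "cmod (g n w) \<le> 1/4" for n
    unfolding g_def using bounds[of "Suc n"] by blast
  have bound: "1/16 * t ^ n \<le> cmod (g n (of_real t * w))" for n
  proof -
    have "n \<le> 2 ^ Suc n"
      using less_exp[of "Suc n"] by linarith
    then have "t ^ n \<le> t ^ 2 ^ Suc n"
      using assms(3) by (intro power_increasing) simp_all
    also have "\<dots> * (1/16) \<le> t ^ 2 ^ Suc n * cmod (g n w)"
      unfolding g_def using greedy_exps_lower_bound[OF assms(1,2)] assms(3)
      by (intro mult_left_mono) simp_all
    also have "\<dots> = cmod (g n (of_real t * w))"
      unfolding g_def poly_square_comp_poly_scale using assms(3)
      by (simp add: norm_mult norm_power)
    finally show ?thesis
      by simp
  qed
  have lim: "filterlim (\<lambda>n. 1/16 * t ^ n) at_top sequentially"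
  proof (rule filterlim_tendsto_pos_mult_at_top[OF tendsto_const])
    have "filterlim (\<lambda>n. norm (t ^ n)) at_top sequentially"
      using assms(3) by (intro filterlim_at_infinity_imp_norm_at_top filterlim_realpow_sequentially_gt1) simp
    moreover have "norm (t ^ n) = t ^ n" for n
      using assms(3) by (simp add: norm_power)
    ultimately show "filterlim (\<lambda>n. t ^ n) at_top sequentially"
      by simp
  qed simp
  show "filterlim (\<lambda>n. cmod (g n (of_real t * w))) at_top sequentially"
    by (rule filterlim_at_top_mono[OF lim], rule always_eventually) (use bound in blast)
qed

lemma open_contains_dilated_pair:
  assumes "open S" "z \<in> S"
  obtains w t where "w \<in> S" "w \<noteq> 0" "1 < t" "complex_of_real t * w \<in> S"
proof -
  have "\<exists>w \<in> S. w \<noteq> 0"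
  proof (rule ccontr)
    assume none: "\<not> ?thesis"
    with assms(2) have "S = {0}"
      by auto
    with assms(1) show False
      using not_open_singleton by metis
  qed
  then obtain w where w: "w \<in> S" "w \<noteq> 0"
    by blast
  obtain \<epsilon> where "\<epsilon> > 0" "ball w \<epsilon> \<subseteq> S"
    using assms(1) w(1) open_contains_ball by blast
  define t where "t = 1 + \<epsilon> / (2 * cmod w)"
  have t: "1 < t"
    unfolding t_def using \<open>\<epsilon> > 0\<close> w by simp
  have "dist w (of_real t * w) = cmod (of_real (t - 1) * w)"
    by (simp add: dist_norm norm_minus_commute algebra_simps)
  also have "\<dots> = (t - 1) * cmod w"
    using t by (simp add: norm_mult del: of_real_diff)
  also have "\<dots> < \<epsilon>"
    unfolding t_def using \<open>\<epsilon> > 0\<close> w by simp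
  finally have "of_real t * w \<in> S"
    using \<open>ball w \<epsilon> \<subseteq> S\<close> by auto
  with w t show ?thesis
    using that by blast
qed

lemma not_normal_word_semigroup:
  assumes "open V" "z \<in> V" "cmod z < 1/4"
  shows "\<not> normal_family word_semigroup V"
proof -
  have "open (V \<inter> ball 0 (1/4))" "z \<in> V \<inter> ball 0 (1/4)"
    using assms by auto
  then obtain w t where w: "w \<in> V \<inter> ball 0 (1/4)" "w \<noteq> 0" and t: "1 < t" "of_real t * w \<in> V \<inter> ball 0 (1/4)"
    by (rule open_contains_dilated_pair)
  obtain g where "\<And>n. g n \<in> word_semigroup" "\<And>n. cmod (g n w) \<le> 1/4"
    "filterlim (\<lambda>n. cmod (g n (of_real t * w))) at_top sequentially"
    using word_semigroup_escaping_sequence[of w t] w t by auto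
  then show ?thesis
    using not_normal_family_if_bounded_and_escaping w t by blast
qed

theorem corollary3:
  shows "\<exists>U. open U \<and> 0 \<in> U \<and> U \<subseteq> julia_set word_semigroup"
proof (intro exI conjI)
  show "open (ball (0::complex) (1/4))" "(0::complex) \<in> ball 0 (1/4)"
    by simp_all
  show "ball 0 (1/4) \<subseteq> julia_set word_semigroup"
    unfolding julia_set_def fatou_set_def using not_normal_word_semigroup by auto
qed

end
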